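(* $\mathsf{Gap_{tot}P}=\mathsf{GapP}$.
   Context: An NPTM is a non-deterministic polynomial-time Turing machine. For an NPTM $M$ and input $x$, $acc_M(x)$ and $rej_M(x)$ denote the numbers of accepting and rejecting computation paths of $M$ on $x$, and $tot_M(x)$ denotes the number of all computation paths of $M$ on $x$ minus $1$. $\mathsf{TotP}=\{tot_M\mid M \text{ an NPTM}\}$, $\mathsf{GapP}=\{acc_M-rej_M\mid M\text{ an NPTM}\}$ (functions $\Sigma^*\to\mathbb{Z}$). $\mathsf{Gap_{tot}P}$ is the class of functions $f$ that are the difference $f=g-h$ of two functions $g,h\in\mathsf{TotP}$. *)

theory Defs
  imports Main
begin

text \<open>Tape symbols are naturals; 0 is the blank,
  1 encodes input bit False, 2 encodes input bit True.
  A transition (q, a, q', b, m) means: in state q reading a, go to state q',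
  write b, move head by m.\<close>

datatype move = MLeft | MStay | MRight

type_synonym trans = "nat \<times> nat \<times> nat \<times> nat \<times> move"

record nptm =
  delta :: "trans set"
  start_st :: nat
  accept_st :: nat
  reject_st :: nat

type_synonym config = "nat \<times> (int \<Rightarrow> nat) \<times> int"

fun move_off :: "move \<Rightarrow> int" where
  "move_off MLeft = -1" | "move_off MStay = 0" | "move_off MRight = 1"

definition init_config :: "nptm \<Rightarrow> bool list \<Rightarrow> config" where
  "init_config M x = (start_st M,
     (\<lambda>i. if 0 \<le> i \<and> nat i < length x then (if x ! nat i then 2 else 1) else 0), 0)"

definition applicable :: "nptm \<Rightarrow> trans \<Rightarrow> config \<Rightarrow> bool" where
  "applicable M t c = (case t of (q, a, q', b, m) \<Rightarrow> case c of (p, tp, h) \<Rightarrow>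
      t \<in> delta M \<and> p = q \<and> tp h = a \<and> p \<noteq> accept_st M \<and> p \<noteq> reject_st M)"

definition apply_trans :: "trans \<Rightarrow> config \<Rightarrow> config" where
  "apply_trans t c = (case t of (q, a, q', b, m) \<Rightarrow> case c of (p, tp, h) \<Rightarrow>
      (q', tp(h := b), h + move_off m))"

fun valid_seq :: "nptm \<Rightarrow> config \<Rightarrow> trans list \<Rightarrow> bool" where
  "valid_seq M c [] = True"
| "valid_seq M c (t # ts) = (applicable M t c \<and> valid_seq M (apply_trans t c) ts)"

fun exec :: "config \<Rightarrow> trans list \<Rightarrow> config" where
  "exec c [] = c"
| "exec c (t # ts) = exec (apply_trans t c) ts"

definition halted :: "nptm \<Rightarrow> config \<Rightarrow> bool" where
  "halted M c = (\<not> (\<exists>t. applicable M t c))"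

text \<open>A computation path is a maximal sequence of nondeterministic choices
  (transitions) from the initial configuration.\<close>
definition paths :: "nptm \<Rightarrow> bool list \<Rightarrow> trans list set" where
  "paths M x = {ts. valid_seq M (init_config M x) ts \<and> halted M (exec (init_config M x) ts)}"

definition acc :: "nptm \<Rightarrow> bool list \<Rightarrow> nat" where
  "acc M x = card {ts \<in> paths M x. fst (exec (init_config M x) ts) = accept_st M}"

definition rej :: "nptm \<Rightarrow> bool list \<Rightarrow> nat" where
  "rej M x = card {ts \<in> paths M x. fst (exec (init_config M x) ts) \<noteq> accept_st M}"

definition tot :: "nptm \<Rightarrow> bool list \<Rightarrow> nat" where
  "tot M x = card (paths M x) - 1"

definition poly_time :: "nptm \<Rightarrow> bool" where
  "poly_time M = (\<exists>k::nat. \<forall>x ts. valid_seq M (init_config M x) ts \<longrightarrow>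
       length ts \<le> k * length x ^ k + k)"

definition is_NPTM :: "nptm \<Rightarrow> bool" where
  "is_NPTM M = (finite (delta M) \<and> accept_st M \<noteq> reject_st M \<and> poly_time M)"

definition TotP :: "(bool list \<Rightarrow> nat) set" where
  "TotP = {tot M | M. is_NPTM M}"

definition GapP :: "(bool list \<Rightarrow> int) set" where
  "GapP = {(\<lambda>x. int (acc M x) - int (rej M x)) | M. is_NPTM M}"

definition Gap_totP :: "(bool list \<Rightarrow> int) set" where
  "Gap_totP = {(\<lambda>x. int (g x) - int (h x)) | g h. g \<in> TotP \<and> h \<in> TotP}"

end

theory Submission
  imports Defs
begin

text \<open>
  For \<open>GapP \<subseteq> Gap_totP\<close>, extend a machine \<open>M\<close> so that every accepting leaf
  branches into two leaves and every rejecting leaf stays a single leaf: the result has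
  \<open>#paths M + acc M\<close> paths; with the roles of accepting and rejecting leaves exchanged it has
  \<open>#paths M + rej M\<close> paths, and the difference of the two \<open>tot\<close> functions is \<open>acc M - rej M\<close>.
  For \<open>Gap_totP \<subseteq> GapP\<close>, a machine that first guesses whether to run \<open>G\<close> or \<open>H\<close>, and then
  accepts on every halting path of \<open>G\<close> and rejects on every halting path of \<open>H\<close>, has
  \<open>acc = #paths G\<close> and \<open>rej = #paths H\<close>, whose difference is \<open>tot G - tot H\<close>.
  Both constructions embed copies of machines with relabelled states, and the paths of such a
  copy are counted by a sum over the halting runs of the original machine.
\<close>

declare split_paired_All [simp del] split_paired_Ex [simp del]

section \<open>Runs and sums over halting runs\<close>

definition enabled :: "nptm \<Rightarrow> config \<Rightarrow> trans set" where
  "enabled M c = {t. applicable M t c}"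

definition halting_runs :: "nptm \<Rightarrow> config \<Rightarrow> trans list set" where
  "halting_runs M c = {ts. valid_seq M c ts \<and> halted M (exec c ts)}"

definition run_sum :: "nptm \<Rightarrow> config \<Rightarrow> (config \<Rightarrow> 'a::comm_monoid_add) \<Rightarrow> 'a" where
  "run_sum M c f = (\<Sum>ts\<in>halting_runs M c. f (exec c ts))"

definition runs_bounded :: "nptm \<Rightarrow> config \<Rightarrow> nat \<Rightarrow> bool" where
  "runs_bounded M c n \<longleftrightarrow> (\<forall>ts. valid_seq M c ts \<longrightarrow> length ts \<le> n)"

lemma applicable_iff:
  "applicable M t (q, tp, h) \<longleftrightarrow>
     t \<in> delta M \<and> fst t = q \<and> fst (snd t) = tp h \<and> q \<noteq> accept_st M \<and> q \<noteq> reject_st M"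
  by (cases t) (auto simp: applicable_def)

lemma apply_trans_simp [simp]:
  "apply_trans (q, a, q', b, m) (p, tp, h) = (q', tp(h := b), h + move_off m)"
  by (simp add: apply_trans_def)

lemma applicable_in_delta: "applicable M t c \<Longrightarrow> t \<in> delta M"
  by (cases c) (simp add: applicable_iff)

lemma finite_enabled: "finite (delta M) \<Longrightarrow> finite (enabled M c)"
  by (rule finite_subset[of _ "delta M"]) (auto simp: enabled_def applicable_in_delta)

lemma halted_iff_enabled_empty: "halted M c \<longleftrightarrow> enabled M c = {}"
  by (simp add: halted_def enabled_def)

lemma halted_final_state: "q = accept_st M \<or> q = reject_st M \<Longrightarrow> halted M (q, tp, h)"
  by (auto simp: halted_def applicable_iff)

lemma halted_iff_scanned: "halted M (q, tp, h) \<longleftrightarrow> halted M (q, \<lambda>_. tp h, 0)"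
  by (simp add: halted_def applicable_iff)

lemma valid_seq_subset_delta: "valid_seq M c ts \<Longrightarrow> set ts \<subseteq> delta M"
proof (induction ts arbitrary: c)
  case (Cons t ts)
  then show ?case
    using applicable_in_delta by (metis insert_subset list.set(2) valid_seq.simps(2))
qed simp

lemma valid_seq_halted: "halted M c \<Longrightarrow> valid_seq M c ts \<longleftrightarrow> ts = []"
  by (cases ts) (auto simp: halted_def)

lemma halting_runs_halted: "halted M c \<Longrightarrow> halting_runs M c = {[]}"
  by (auto simp: halting_runs_def valid_seq_halted)

lemma halting_runs_not_halted:
  assumes "\<not> halted M c"
  shows "halting_runs M c = (\<Union>t\<in>enabled M c. (#) t ` halting_runs M (apply_trans t c))"
proof (rule set_eqI)
  fix ts show "ts \<in> halting_runs M c \<longleftrightarrow> ts \<in> (\<Union>t\<in>enabled M c. (#) t ` halting_runs M (apply_trans t c))"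
    using assms by (cases ts) (auto simp: halting_runs_def enabled_def)
qed

lemma runs_bounded_0_iff: "runs_bounded M c 0 \<longleftrightarrow> halted M c"
proof
  assume "runs_bounded M c 0"
  then show "halted M c"
    unfolding halted_def by (force simp: runs_bounded_def dest: spec[of _ "[_]"])
qed (simp add: runs_bounded_def valid_seq_halted)

lemma runs_bounded_Suc_iff:
  "runs_bounded M c (Suc n) \<longleftrightarrow> (\<forall>t. applicable M t c \<longrightarrow> runs_bounded M (apply_trans t c) n)"
proof
  assume "runs_bounded M c (Suc n)"
  then show "\<forall>t. applicable M t c \<longrightarrow> runs_bounded M (apply_trans t c) n"
    unfolding runs_bounded_def by (force dest: spec[of _ "_ # _"])
next
  assume step: "\<forall>t. applicable M t c \<longrightarrow> runs_bounded M (apply_trans t c) n"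
  show "runs_bounded M c (Suc n)"
    unfolding runs_bounded_def
  proof (intro allI impI)
    fix ts assume "valid_seq M c ts"
    then show "length ts \<le> Suc n"
      using step by (cases ts) (auto simp: runs_bounded_def)
  qed
qed

lemma runs_bounded_mono: "runs_bounded M c m \<Longrightarrow> m \<le> n \<Longrightarrow> runs_bounded M c n"
  by (auto simp: runs_bounded_def intro: order_trans)

lemma finite_halting_runs:
  assumes "finite (delta M)" and "runs_bounded M c n"
  shows "finite (halting_runs M c)"
proof (rule finite_subset)
  show "halting_runs M c \<subseteq> {ts. set ts \<subseteq> delta M \<and> length ts \<le> n}"
    using assms(2) by (auto simp: halting_runs_def runs_bounded_def dest: valid_seq_subset_delta)
  show "finite {ts. set ts \<subseteq> delta M \<and> length ts \<le> n}"
    using finite_lists_length_le[OF assms(1)] .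
qed

lemma halting_runs_nonempty: "runs_bounded M c n \<Longrightarrow> halting_runs M c \<noteq> {}"
proof (induction n arbitrary: c)
  case 0
  then show ?case by (simp add: runs_bounded_0_iff halting_runs_halted)
next
  case (Suc n)
  show ?case
  proof (cases "halted M c")
    case True
    then show ?thesis by (simp add: halting_runs_halted)
  next
    case False
    then obtain t where t: "applicable M t c" by (auto simp: halted_def)
    with Suc.prems have "halting_runs M (apply_trans t c) \<noteq> {}"
      by (intro Suc.IH) (simp add: runs_bounded_Suc_iff)
    with t False show ?thesis by (auto simp: halting_runs_not_halted enabled_def)
  qed
qed

lemma run_sum_halted: "halted M c \<Longrightarrow> run_sum M c f = f c"
  by (simp add: run_sum_def halting_runs_halted)

lemma run_sum_step:
  assumes "finite (delta M)" and "runs_bounded M c n" and "\<not> halted M c"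
  shows "run_sum M c f = (\<Sum>t\<in>enabled M c. run_sum M (apply_trans t c) f)"
proof -
  obtain m where m: "n = Suc m"
    using assms(2,3) runs_bounded_0_iff by (cases n) auto
  have "finite (halting_runs M (apply_trans t c))" if "t \<in> enabled M c" for t
    using that assms(2) by (intro finite_halting_runs[OF assms(1)]) (auto simp: m runs_bounded_Suc_iff enabled_def)
  then have "run_sum M c f = (\<Sum>t\<in>enabled M c. \<Sum>ts\<in>(#) t ` halting_runs M (apply_trans t c). f (exec c ts))"
    unfolding run_sum_def halting_runs_not_halted[OF assms(3)]
    by (intro sum.UNION_disjoint) (auto simp: finite_enabled assms(1))
  also have "\<dots> = (\<Sum>t\<in>enabled M c. run_sum M (apply_trans t c) f)"
    by (auto simp: run_sum_def sum.reindex intro!: sum.cong)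
  finally show ?thesis .
qed

lemma run_sum_add: "run_sum M c (\<lambda>d. f d + g d) = run_sum M c f + run_sum M c g"
  by (simp add: run_sum_def sum.distrib)

lemma run_sum_zero [simp]: "run_sum M c (\<lambda>_. 0) = 0"
  by (simp add: run_sum_def)

lemma paths_eq_halting_runs: "paths M x = halting_runs M (init_config M x)"
  by (simp add: paths_def halting_runs_def)

lemma poly_time_iff_runs_bounded:
  "poly_time M \<longleftrightarrow> (\<exists>k. \<forall>x. runs_bounded M (init_config M x) (k * length x ^ k + k))"
  by (simp add: poly_time_def runs_bounded_def)

lemma mult_power_self_mono:
  fixes k k' n :: nat
  assumes "k \<le> k'"
  shows "k * n ^ k \<le> k' * n ^ k'"
proof (cases "n = 0")
  case True
  with assms show ?thesis by (cases k) auto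
next
  case False
  with assms show ?thesis by (simp add: mult_le_mono power_increasing)
qed

lemma poly_timeI:
  assumes "\<And>x. runs_bounded M (init_config M x) (k * length x ^ k + k + j)"
  shows "poly_time M"
  unfolding poly_time_iff_runs_bounded
proof (intro exI allI)
  fix x :: "bool list"
  have "k * length x ^ k + k + j \<le> (k + j) * length x ^ (k + j) + (k + j)"
    using mult_power_self_mono[of k "k + j" "length x"] by simp
  then show "runs_bounded M (init_config M x) ((k + j) * length x ^ (k + j) + (k + j))"
    by (rule runs_bounded_mono[OF assms])
qed

lemma NPTM_runs_bounded:
  assumes "is_NPTM M"
  obtains k where "\<And>x. runs_bounded M (init_config M x) (k * length x ^ k + k)"
  using assms by (auto simp: is_NPTM_def poly_time_iff_runs_bounded)

lemma finite_paths:
  assumes "is_NPTM M"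
  shows "finite (paths M x)"
proof -
  obtain k where "\<And>x. runs_bounded M (init_config M x) (k * length x ^ k + k)"
    using NPTM_runs_bounded[OF assms] by blast
  with assms show ?thesis
    unfolding paths_eq_halting_runs is_NPTM_def by (blast intro: finite_halting_runs)
qed

lemma card_paths_pos:
  assumes "is_NPTM M"
  shows "card (paths M x) > 0"
proof -
  have "paths M x \<noteq> {}"
    unfolding paths_eq_halting_runs using assms by (rule NPTM_runs_bounded) (rule halting_runs_nonempty)
  with finite_paths[OF assms] show ?thesis
    by (simp add: card_gt_0_iff)
qed

lemma card_paths_eq_run_sum: "card (paths M x) = run_sum M (init_config M x) (\<lambda>_. 1)"
  by (simp add: run_sum_def paths_eq_halting_runs)

lemma acc_eq_run_sum:
  "is_NPTM M \<Longrightarrow> acc M x = run_sum M (init_config M x) (\<lambda>(q, _). if q = accept_st M then 1 else 0)"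
  unfolding acc_def run_sum_def paths_eq_halting_runs[symmetric]
  by (simp add: finite_paths sum.inter_filter[symmetric] case_prod_beta)

lemma rej_eq_run_sum:
  "is_NPTM M \<Longrightarrow> rej M x = run_sum M (init_config M x) (\<lambda>(q, _). if q \<noteq> accept_st M then 1 else 0)"
  unfolding rej_def run_sum_def paths_eq_halting_runs[symmetric]
  by (simp add: finite_paths sum.inter_filter[symmetric] case_prod_beta)

section \<open>Relabelled copies of a machine with branching leaves\<close>

definition states :: "nptm \<Rightarrow> nat set" where
  "states M = {start_st M, accept_st M, reject_st M} \<union> fst ` delta M \<union> (\<lambda>(_, _, q', _). q') ` delta M"

definition tape_symbols :: "nptm \<Rightarrow> nat set" where
  "tape_symbols M = {0, 1, 2} \<union> (\<lambda>(_, _, _, b, _). b) ` delta M"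

fun wf_config :: "nptm \<Rightarrow> config \<Rightarrow> bool" where
  "wf_config M (q, tp, h) \<longleftrightarrow> q \<in> states M \<and> range tp \<subseteq> tape_symbols M"

lemma wf_config_init: "wf_config M (init_config M x)"
  by (auto simp: init_config_def states_def tape_symbols_def)

lemma wf_config_step: "wf_config M c \<Longrightarrow> applicable M t c \<Longrightarrow> wf_config M (apply_trans t c)"
proof (cases c, cases t)
  fix p tp h q a q' b m
  assume c: "c = (p, tp, h)" and t: "t = (q, a, q', b, m)"
  assume "wf_config M c" and "applicable M t c"
  then have "(q, a, q', b, m) \<in> delta M" and "range tp \<subseteq> tape_symbols M"
    by (auto simp: c t applicable_iff)
  then show "wf_config M (apply_trans t c)"
    by (force simp: c t states_def tape_symbols_def)
qed

text \<open>
  The copy relabels each state \<open>q\<close> of \<open>M\<close> as \<open>3 q + r\<close>, leaving the other residues modulo 3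
  to the surrounding machine. Where \<open>M\<close> halts in state \<open>q\<close> scanning \<open>a\<close>, the copy instead makes
  one more step, which leaves the tape unchanged, into each state of \<open>Tacc\<close> if \<open>q\<close> is accepting
  and of \<open>Trej\<close> otherwise. To keep the transition set finite, these leaf steps are only added for
  pairs in \<open>states M \<times> tape_symbols M\<close>; configurations satisfying \<open>wf_config\<close> only meet such
  pairs, and whether a configuration halts depends only on its state and scanned symbol.
\<close>

fun shift_trans :: "nat \<Rightarrow> trans \<Rightarrow> trans" where
  "shift_trans r (q, a, q', b, m) = (3 * q + r, a, 3 * q' + r, b, m)"

definition shift_config :: "nat \<Rightarrow> config \<Rightarrow> config" where
  "shift_config r c = (3 * fst c + r, snd c)"

definition leaf_trans :: "nat \<Rightarrow> nat \<Rightarrow> nat \<Rightarrow> nat \<Rightarrow> trans" where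
  "leaf_trans r q a p = (3 * q + r, a, p, a, MStay)"

definition halting_pairs :: "nptm \<Rightarrow> (nat \<times> nat) set" where
  "halting_pairs M = {(q, a) \<in> states M \<times> tape_symbols M. halted M (q, \<lambda>_. a, 0)}"

definition leaf_targets :: "nptm \<Rightarrow> nat set \<Rightarrow> nat set \<Rightarrow> nat \<Rightarrow> nat set" where
  "leaf_targets M Tacc Trej q = (if q = accept_st M then Tacc else Trej)"

definition leaf_copy :: "nptm \<Rightarrow> nat \<Rightarrow> nat set \<Rightarrow> nat set \<Rightarrow> trans set" where
  "leaf_copy M r Tacc Trej =
     shift_trans r ` {t \<in> delta M. fst t \<noteq> accept_st M \<and> fst t \<noteq> reject_st M} \<union>
     (\<Union>(q, a)\<in>halting_pairs M. leaf_trans r q a ` leaf_targets M Tacc Trej q)"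

lemma apply_shift_trans:
  "apply_trans (shift_trans r t) (shift_config r c) = shift_config r (apply_trans t c)"
  by (cases t; cases c) (simp add: shift_config_def)

lemma inj_shift_trans: "inj (shift_trans r)"
proof (rule injI)
  fix t t' assume "shift_trans r t = shift_trans r t'"
  then show "t = t'" by (cases t; cases t') simp
qed

lemma apply_leaf_trans: "apply_trans (leaf_trans r q (tp h) p) (shift_config r (q, tp, h)) = (p, tp, h)"
  by (simp add: leaf_trans_def shift_config_def)

lemma inj_leaf_trans: "inj (leaf_trans r q a)"
  by (rule injI) (simp add: leaf_trans_def)

lemma init_config_shift:
  "start_st M' = 3 * start_st M + r \<Longrightarrow> init_config M' x = shift_config r (init_config M x)"
  by (simp add: init_config_def shift_config_def)

lemma finite_leaf_copy:
  assumes "finite (delta M)" and "finite Tacc" and "finite Trej"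
  shows "finite (leaf_copy M r Tacc Trej)"
proof -
  have "halting_pairs M \<subseteq> states M \<times> tape_symbols M"
    by (auto simp: halting_pairs_def)
  moreover have "finite (states M \<times> tape_symbols M)"
    using assms(1) by (simp add: states_def tape_symbols_def)
  ultimately have "finite (halting_pairs M)"
    by (rule finite_subset)
  with assms show ?thesis
    unfolding leaf_copy_def
    by (intro finite_UnI finite_imageI finite_UN_I) (simp_all add: leaf_targets_def split: prod.splits)
qed

lemma fst_shift_trans: "fst (shift_trans r t) = 3 * fst t + r" "fst (snd (shift_trans r t)) = fst (snd t)"
  by (cases t; simp)+

lemma shift_trans_in_leaf_copy:
  "t \<in> delta M \<Longrightarrow> fst t \<noteq> accept_st M \<Longrightarrow> fst t \<noteq> reject_st M \<Longrightarrow>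
     shift_trans r t \<in> leaf_copy M r Tacc Trej"
  by (simp add: leaf_copy_def)

lemma leaf_trans_in_leaf_copy:
  "(q, a) \<in> halting_pairs M \<Longrightarrow> p \<in> leaf_targets M Tacc Trej q \<Longrightarrow>
     leaf_trans r q a p \<in> leaf_copy M r Tacc Trej"
  unfolding leaf_copy_def by blast

lemma leaf_copyE:
  assumes "t \<in> leaf_copy M r Tacc Trej"
  obtains (shifted) t0 where "t0 \<in> delta M" "fst t0 \<noteq> accept_st M" "fst t0 \<noteq> reject_st M"
      "t = shift_trans r t0"
  | (leaf) q a p where "(q, a) \<in> halting_pairs M" "p \<in> leaf_targets M Tacc Trej q"
      "t = leaf_trans r q a p"
  using assms unfolding leaf_copy_def by blast

lemma leaf_copy_state_mod: "t \<in> leaf_copy M r Tacc Trej \<Longrightarrow> fst t mod 3 = r mod 3"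
  by (erule leaf_copyE) (simp_all add: fst_shift_trans leaf_trans_def)

locale leaf_copy_machine =
  fixes M' M :: nptm and r :: nat and Tacc Trej :: "nat set" and Other :: "trans set"
  assumes delta_eq: "delta M' = Other \<union> leaf_copy M r Tacc Trej"
    and other_states: "\<And>t. t \<in> Other \<Longrightarrow> fst t mod 3 \<noteq> r"
    and r_less: "r < 3"
    and final_states: "accept_st M' mod 3 \<noteq> r" "reject_st M' mod 3 \<noteq> r"
    and targets_final: "Tacc \<union> Trej \<subseteq> {accept_st M', reject_st M'}"
    and targets_nonempty: "Tacc \<noteq> {}" "Trej \<noteq> {}"
    and finite_delta: "finite (delta M)" "finite (delta M')"
begin

lemma enabled_shift_config:
  "t \<in> enabled M' (shift_config r (q, tp, h)) \<longleftrightarrow>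
     t \<in> leaf_copy M r Tacc Trej \<and> fst t = 3 * q + r \<and> fst (snd t) = tp h"
proof -
  have shifted_mod: "(3 * q + r) mod 3 = r"
    using r_less by simp
  then have "3 * q + r \<noteq> accept_st M'" "3 * q + r \<noteq> reject_st M'"
    using final_states by metis+
  moreover have "t \<notin> Other" if "fst t = 3 * q + r"
    using that other_states shifted_mod by metis
  ultimately show ?thesis
    by (auto simp: enabled_def applicable_iff delta_eq shift_config_def)
qed

lemma enabled_shift_not_halted:
  assumes "\<not> halted M c"
  shows "enabled M' (shift_config r c) = shift_trans r ` enabled M c"
proof (rule set_eqI)
  obtain q tp h where c: "c = (q, tp, h)" by (cases c)
  fix t
  show "t \<in> enabled M' (shift_config r c) \<longleftrightarrow> t \<in> shift_trans r ` enabled M c"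
  proof
    assume "t \<in> enabled M' (shift_config r c)"
    then have t: "t \<in> leaf_copy M r Tacc Trej" "fst t = 3 * q + r" "fst (snd t) = tp h"
      by (simp_all add: c enabled_shift_config)
    from t(1) show "t \<in> shift_trans r ` enabled M c"
    proof (cases rule: leaf_copyE)
      case (shifted t0)
      with t have "applicable M t0 c"
        by (simp add: c applicable_iff fst_shift_trans)
      with shifted show ?thesis
        by (simp add: enabled_def)
    next
      case (leaf q' a p)
      with t have "(q, tp h) \<in> halting_pairs M"
        by (simp add: leaf_trans_def)
      with assms show ?thesis
        by (simp add: c halting_pairs_def halted_iff_scanned[symmetric])
    qed
  next
    assume "t \<in> shift_trans r ` enabled M c"
    then obtain t0 where "applicable M t0 c" and "t = shift_trans r t0"
      by (auto simp: enabled_def)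
    then show "t \<in> enabled M' (shift_config r c)"
      by (simp add: c enabled_shift_config applicable_iff fst_shift_trans shift_trans_in_leaf_copy)
  qed
qed

lemma enabled_shift_halted:
  assumes "wf_config M (q, tp, h)" and "halted M (q, tp, h)"
  shows "enabled M' (shift_config r (q, tp, h)) = leaf_trans r q (tp h) ` leaf_targets M Tacc Trej q"
proof (rule set_eqI)
  fix t
  have pair: "(q, tp h) \<in> halting_pairs M"
    using assms by (auto simp: halting_pairs_def halted_iff_scanned[symmetric])
  show "t \<in> enabled M' (shift_config r (q, tp, h)) \<longleftrightarrow> t \<in> leaf_trans r q (tp h) ` leaf_targets M Tacc Trej q"
  proof
    assume "t \<in> enabled M' (shift_config r (q, tp, h))"
    then have t: "t \<in> leaf_copy M r Tacc Trej" "fst t = 3 * q + r" "fst (snd t) = tp h"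
      by (simp_all add: enabled_shift_config)
    from t(1) show "t \<in> leaf_trans r q (tp h) ` leaf_targets M Tacc Trej q"
    proof (cases rule: leaf_copyE)
      case (shifted t0)
      with t have "applicable M t0 (q, tp, h)"
        by (simp add: applicable_iff fst_shift_trans)
      with assms(2) show ?thesis
        by (simp add: halted_def)
    next
      case (leaf q' a p)
      with t show ?thesis
        by (simp add: leaf_trans_def)
    qed
  next
    assume "t \<in> leaf_trans r q (tp h) ` leaf_targets M Tacc Trej q"
    then obtain p where p: "p \<in> leaf_targets M Tacc Trej q" and t: "t = leaf_trans r q (tp h) p"
      by blast
    have "t \<in> leaf_copy M r Tacc Trej"
      unfolding t using pair p by (rule leaf_trans_in_leaf_copy)
    then show "t \<in> enabled M' (shift_config r (q, tp, h))"
      by (simp add: enabled_shift_config t leaf_trans_def)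
  qed
qed

lemma shift_config_not_halted:
  assumes "wf_config M c"
  shows "\<not> halted M' (shift_config r c)"
proof -
  obtain q tp h where c: "c = (q, tp, h)" by (cases c)
  show ?thesis
  proof (cases "halted M c")
    case True
    have "leaf_targets M Tacc Trej q \<noteq> {}"
      using targets_nonempty by (simp add: leaf_targets_def)
    with enabled_shift_halted[of q tp h] assms True show ?thesis
      by (simp add: c halted_iff_enabled_empty)
  next
    case False
    with enabled_shift_not_halted[OF False] show ?thesis
      by (simp add: halted_iff_enabled_empty)
  qed
qed

lemma halted_after_leaf_trans:
  assumes "p \<in> leaf_targets M Tacc Trej q"
  shows "halted M' (apply_trans (leaf_trans r q (tp h) p) (shift_config r (q, tp, h)))"
proof -
  have "p = accept_st M' \<or> p = reject_st M'"
    using assms targets_final by (auto simp: leaf_targets_def split: if_splits)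
  then show ?thesis
    unfolding apply_leaf_trans by (rule halted_final_state)
qed

lemma runs_bounded_shift_halted:
  assumes "wf_config M c" and "halted M c"
  shows "runs_bounded M' (shift_config r c) 1"
proof -
  obtain q tp h where c: "c = (q, tp, h)" by (cases c)
  have "halted M' (apply_trans t (shift_config r c))" if "applicable M' t (shift_config r c)" for t
  proof -
    from that have "t \<in> enabled M' (shift_config r c)"
      by (simp add: enabled_def)
    then have "t \<in> leaf_trans r q (tp h) ` leaf_targets M Tacc Trej q"
      using enabled_shift_halted assms unfolding c by blast
    then show ?thesis
      using halted_after_leaf_trans by (auto simp: c)
  qed
  then show ?thesis
    by (simp add: runs_bounded_Suc_iff runs_bounded_0_iff)
qed

lemma runs_bounded_shift:
  assumes "wf_config M c" and "runs_bounded M c n"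
  shows "runs_bounded M' (shift_config r c) (Suc n)"
  using assms
proof (induction n arbitrary: c)
  case 0
  then show ?case
    using runs_bounded_shift_halted by (simp add: runs_bounded_0_iff)
next
  case (Suc n)
  show ?case
  proof (cases "halted M c")
    case True
    with Suc.prems show ?thesis
      using runs_bounded_shift_halted runs_bounded_mono by fastforce
  next
    case False
    show ?thesis
    proof (rule runs_bounded_Suc_iff[THEN iffD2], intro allI impI)
      fix t assume "applicable M' t (shift_config r c)"
      then obtain t0 where t0: "applicable M t0 c" and t: "t = shift_trans r t0"
        using enabled_shift_not_halted[OF False] unfolding enabled_def by blast
      have "runs_bounded M' (shift_config r (apply_trans t0 c)) (Suc n)"
        using Suc.prems t0 by (intro Suc.IH wf_config_step) (auto simp: runs_bounded_Suc_iff)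
      then show "runs_bounded M' (apply_trans t (shift_config r c)) (Suc n)"
        by (simp add: t apply_shift_trans)
    qed
  qed
qed

lemma run_sum_shift_halted:
  assumes "wf_config M (q, tp, h)" and "halted M (q, tp, h)"
  shows "run_sum M' (shift_config r (q, tp, h)) f = (\<Sum>p\<in>leaf_targets M Tacc Trej q. f (p, tp, h))"
proof -
  let ?c = "shift_config r (q, tp, h)"
  have "run_sum M' ?c f = (\<Sum>t\<in>enabled M' ?c. run_sum M' (apply_trans t ?c) f)"
    using finite_delta(2) runs_bounded_shift_halted assms shift_config_not_halted
    by (blast intro: run_sum_step)
  also have "\<dots> = (\<Sum>p\<in>leaf_targets M Tacc Trej q. run_sum M' (apply_trans (leaf_trans r q (tp h) p) ?c) f)"
    unfolding enabled_shift_halted[OF assms] by (simp add: sum.reindex inj_leaf_trans[THEN inj_on_subset])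
  also have "\<dots> = (\<Sum>p\<in>leaf_targets M Tacc Trej q. f (p, tp, h))"
    using halted_after_leaf_trans by (simp add: run_sum_halted apply_leaf_trans)
  finally show ?thesis .
qed

lemma run_sum_shift:
  assumes "wf_config M c" and "runs_bounded M c n"
  shows "run_sum M' (shift_config r c) f =
    run_sum M c (\<lambda>(q, tp, h). \<Sum>p\<in>leaf_targets M Tacc Trej q. f (p, tp, h))"
    (is "_ = run_sum M c ?leaves")
proof -
  have halted_case: "run_sum M' (shift_config r c) f = run_sum M c ?leaves"
    if "wf_config M c" and "halted M c" for c
    using that run_sum_shift_halted by (cases c) (simp add: run_sum_halted)
  from assms show ?thesis
  proof (induction n arbitrary: c)
    case 0
    then show ?case
      by (intro halted_case) (simp_all add: runs_bounded_0_iff)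
  next
    case (Suc n)
    show ?case
    proof (cases "halted M c")
      case True
      with Suc.prems(1) show ?thesis
        by (rule halted_case)
    next
      case False
      have "run_sum M' (shift_config r c) f =
          (\<Sum>t\<in>enabled M' (shift_config r c). run_sum M' (apply_trans t (shift_config r c)) f)"
        using Suc.prems
        by (intro run_sum_step[OF finite_delta(2) runs_bounded_shift] shift_config_not_halted)
      also have "\<dots> = (\<Sum>t\<in>enabled M c. run_sum M' (shift_config r (apply_trans t c)) f)"
        unfolding enabled_shift_not_halted[OF False]
        by (simp add: sum.reindex inj_shift_trans[THEN inj_on_subset] apply_shift_trans)
      also have "\<dots> = (\<Sum>t\<in>enabled M c. run_sum M (apply_trans t c) ?leaves)"
        using Suc.prems
        by (intro sum.cong refl Suc.IH wf_config_step) (auto simp: enabled_def runs_bounded_Suc_iff)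
      also have "\<dots> = run_sum M c ?leaves"
        using Suc.prems False by (intro run_sum_step[symmetric] finite_delta)
      finally show ?thesis .
    qed
  qed
qed

end

section \<open>Gap functions as differences of path counts\<close>

definition leaf_machine :: "nptm \<Rightarrow> nat set \<Rightarrow> nat set \<Rightarrow> nptm" where
  "leaf_machine M Tacc Trej =
     \<lparr>delta = leaf_copy M 1 Tacc Trej, start_st = 3 * start_st M + 1, accept_st = 0, reject_st = 3\<rparr>"

lemma leaf_copy_machine_leaf_machine:
  assumes "finite (delta M)" and "Tacc \<noteq> {}" "Trej \<noteq> {}" "Tacc \<union> Trej \<subseteq> {0, 3}"
  shows "leaf_copy_machine (leaf_machine M Tacc Trej) M 1 Tacc Trej {}"
proof -
  have "finite Tacc" "finite Trej"
    using assms(4) finite_subset by auto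
  with assms show ?thesis
    by unfold_locales (auto simp: leaf_machine_def finite_leaf_copy)
qed

lemma init_config_leaf_machine:
  "init_config (leaf_machine M Tacc Trej) x = shift_config 1 (init_config M x)"
  by (rule init_config_shift) (simp add: leaf_machine_def)

lemma NPTM_leaf_machine:
  assumes M: "is_NPTM M" and T: "Tacc \<noteq> {}" "Trej \<noteq> {}" "Tacc \<union> Trej \<subseteq> {0, 3}"
  shows "is_NPTM (leaf_machine M Tacc Trej)"
proof -
  from M T interpret leaf_copy_machine "leaf_machine M Tacc Trej" M 1 Tacc Trej "{}"
    by (intro leaf_copy_machine_leaf_machine) (simp_all add: is_NPTM_def)
  obtain k where k: "\<And>x. runs_bounded M (init_config M x) (k * length x ^ k + k)"
    using NPTM_runs_bounded[OF M] by blast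
  have "poly_time (leaf_machine M Tacc Trej)"
    using runs_bounded_shift[OF wf_config_init k]
    by (intro poly_timeI[where j = 1]) (simp add: init_config_leaf_machine)
  with finite_delta(2) show ?thesis
    by (simp add: is_NPTM_def leaf_machine_def)
qed

lemma card_paths_leaf_machine:
  assumes M: "is_NPTM M" and T: "Tacc \<noteq> {}" "Trej \<noteq> {}" "Tacc \<union> Trej \<subseteq> {0, 3}"
  shows "card (paths (leaf_machine M Tacc Trej) x) =
    run_sum M (init_config M x) (\<lambda>(q, _). card (leaf_targets M Tacc Trej q))"
proof -
  from M T interpret leaf_copy_machine "leaf_machine M Tacc Trej" M 1 Tacc Trej "{}"
    by (intro leaf_copy_machine_leaf_machine) (simp_all add: is_NPTM_def)
  obtain k where k: "\<And>x. runs_bounded M (init_config M x) (k * length x ^ k + k)"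
    using NPTM_runs_bounded[OF M] by blast
  show ?thesis
    unfolding card_paths_eq_run_sum init_config_leaf_machine run_sum_shift[OF wf_config_init k]
    by (simp add: case_prod_unfold)
qed

lemma card_paths_leaf_machine_accept:
  assumes "is_NPTM M"
  shows "card (paths (leaf_machine M {0, 3} {0}) x) = card (paths M x) + acc M x"
proof -
  have "card (paths (leaf_machine M {0, 3} {0}) x) =
      run_sum M (init_config M x) (\<lambda>(q, _). card (leaf_targets M {0, 3} {0} q))"
    by (rule card_paths_leaf_machine[OF assms]) simp_all
  also have "\<dots> = run_sum M (init_config M x) (\<lambda>d. 1 + (\<lambda>(q, _). if q = accept_st M then 1 else 0) d)"
    by (rule arg_cong[where f = "run_sum M (init_config M x)"]) (auto simp: leaf_targets_def)
  finally show ?thesis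
    by (simp only: run_sum_add card_paths_eq_run_sum acc_eq_run_sum[OF assms])
qed

lemma card_paths_leaf_machine_reject:
  assumes "is_NPTM M"
  shows "card (paths (leaf_machine M {0} {0, 3}) x) = card (paths M x) + rej M x"
proof -
  have "card (paths (leaf_machine M {0} {0, 3}) x) =
      run_sum M (init_config M x) (\<lambda>(q, _). card (leaf_targets M {0} {0, 3} q))"
    by (rule card_paths_leaf_machine[OF assms]) simp_all
  also have "\<dots> = run_sum M (init_config M x) (\<lambda>d. 1 + (\<lambda>(q, _). if q \<noteq> accept_st M then 1 else 0) d)"
    by (rule arg_cong[where f = "run_sum M (init_config M x)"]) (auto simp: leaf_targets_def)
  finally show ?thesis
    by (simp only: run_sum_add card_paths_eq_run_sum rej_eq_run_sum[OF assms])
qed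

lemma GapP_subset_Gap_totP: "GapP \<subseteq> Gap_totP"
proof
  fix f assume "f \<in> GapP"
  then obtain M where M: "is_NPTM M" and f: "f = (\<lambda>x. int (acc M x) - int (rej M x))"
    by (auto simp: GapP_def)
  let ?A = "leaf_machine M {0, 3} {0}" and ?B = "leaf_machine M {0} {0, 3}"
  have "f x = int (tot ?A x) - int (tot ?B x)" for x
    using card_paths_pos[OF M, of x]
    by (simp add: f tot_def card_paths_leaf_machine_accept[OF M] card_paths_leaf_machine_reject[OF M])
  moreover have "is_NPTM ?A" and "is_NPTM ?B"
    using M by (auto intro: NPTM_leaf_machine)
  ultimately show "f \<in> Gap_totP"
    unfolding Gap_totP_def TotP_def by blast
qed

section \<open>Differences of path counts as gap functions\<close>

text \<open>
  From the start state 0 the machine steps, without touching the tape, into the initial state of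
  the copy of \<open>G\<close> or of \<open>H\<close>; the leaves of the copy of \<open>G\<close> all accept (state 3) and those of the
  copy of \<open>H\<close> all reject (state 6).
\<close>

definition choice_start :: "nptm \<Rightarrow> nptm \<Rightarrow> trans set" where
  "choice_start G H =
     (\<lambda>a. (0, a, 3 * start_st G + 1, a, MStay)) ` {0, 1, 2} \<union>
     (\<lambda>a. (0, a, 3 * start_st H + 2, a, MStay)) ` {0, 1, 2}"

definition choice_machine :: "nptm \<Rightarrow> nptm \<Rightarrow> nptm" where
  "choice_machine G H =
     \<lparr>delta = choice_start G H \<union> leaf_copy G 1 {3} {3} \<union> leaf_copy H 2 {6} {6},
      start_st = 0, accept_st = 3, reject_st = 6\<rparr>"

lemma finite_choice_machine:
  "finite (delta G) \<Longrightarrow> finite (delta H) \<Longrightarrow> finite (delta (choice_machine G H))"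
  by (simp add: choice_machine_def choice_start_def finite_leaf_copy)

lemma choice_start_state: "t \<in> choice_start G H \<Longrightarrow> fst t = 0"
  by (auto simp: choice_start_def)

lemma leaf_copy_machine_choice_left:
  assumes "finite (delta G)" and "finite (delta H)"
  shows "leaf_copy_machine (choice_machine G H) G 1 {3} {3} (choice_start G H \<union> leaf_copy H 2 {6} {6})"
proof
  fix t assume "t \<in> choice_start G H \<union> leaf_copy H 2 {6} {6}"
  then show "fst t mod 3 \<noteq> 1"
    using choice_start_state leaf_copy_state_mod by fastforce
qed (use assms finite_choice_machine in \<open>auto simp: choice_machine_def\<close>)

lemma leaf_copy_machine_choice_right:
  assumes "finite (delta G)" and "finite (delta H)"
  shows "leaf_copy_machine (choice_machine G H) H 2 {6} {6} (choice_start G H \<union> leaf_copy G 1 {3} {3})"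
proof
  fix t assume "t \<in> choice_start G H \<union> leaf_copy G 1 {3} {3}"
  then show "fst t mod 3 \<noteq> 2"
    using choice_start_state leaf_copy_state_mod by fastforce
qed (use assms finite_choice_machine in \<open>auto simp: choice_machine_def\<close>)

lemma choice_machine_first_step:
  obtains tG tH where
    "enabled (choice_machine G H) (init_config (choice_machine G H) x) = {tG, tH}" and "tG \<noteq> tH"
    and "apply_trans tG (init_config (choice_machine G H) x) = shift_config 1 (init_config G x)"
    and "apply_trans tH (init_config (choice_machine G H) x) = shift_config 2 (init_config H x)"
proof -
  define tp where "tp = fst (snd (init_config G x))"
  have init: "init_config M x = (start_st M, tp, 0)" for M
    by (simp add: tp_def init_config_def)
  have scanned: "tp 0 \<in> {0, 1, 2}"
    by (simp add: tp_def init_config_def)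
  let ?C = "choice_machine G H"
  let ?tG = "(0, tp 0, 3 * start_st G + 1, tp 0, MStay)"
  let ?tH = "(0, tp 0, 3 * start_st H + 2, tp 0, MStay)"
  have "enabled ?C (init_config ?C x) = {?tG, ?tH}"
  proof (rule set_eqI)
    fix t
    have "t \<notin> leaf_copy G 1 {3} {3} \<union> leaf_copy H 2 {6} {6}" if "fst t = 0"
      using that leaf_copy_state_mod by fastforce
    with scanned show "t \<in> enabled ?C (init_config ?C x) \<longleftrightarrow> t \<in> {?tG, ?tH}"
      by (auto simp: enabled_def applicable_iff init choice_machine_def choice_start_def)
  qed
  moreover have "?tG \<noteq> ?tH"
    by simp presburger
  moreover have "apply_trans ?tG (init_config ?C x) = shift_config 1 (init_config G x)"
    and "apply_trans ?tH (init_config ?C x) = shift_config 2 (init_config H x)"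
    by (simp_all add: init shift_config_def choice_machine_def)
  ultimately show thesis
    using that by blast
qed

lemma runs_bounded_choice_machine:
  assumes "finite (delta G)" and "finite (delta H)"
    and "runs_bounded G (init_config G x) m" and "runs_bounded H (init_config H x) n"
  shows "runs_bounded (choice_machine G H) (init_config (choice_machine G H) x) (Suc (Suc (max m n)))"
proof -
  interpret left: leaf_copy_machine "choice_machine G H" G 1 "{3}" "{3}"
      "choice_start G H \<union> leaf_copy H 2 {6} {6}"
    using assms(1,2) by (rule leaf_copy_machine_choice_left)
  interpret right: leaf_copy_machine "choice_machine G H" H 2 "{6}" "{6}"
      "choice_start G H \<union> leaf_copy G 1 {3} {3}"
    using assms(1,2) by (rule leaf_copy_machine_choice_right)
  obtain tG tH where step:
    "enabled (choice_machine G H) (init_config (choice_machine G H) x) = {tG, tH}"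
    "apply_trans tG (init_config (choice_machine G H) x) = shift_config 1 (init_config G x)"
    "apply_trans tH (init_config (choice_machine G H) x) = shift_config 2 (init_config H x)"
    by (rule choice_machine_first_step)
  have bounds:
    "runs_bounded (choice_machine G H) (shift_config 1 (init_config G x)) (Suc (max m n))"
    "runs_bounded (choice_machine G H) (shift_config 2 (init_config H x)) (Suc (max m n))"
    using left.runs_bounded_shift[OF wf_config_init assms(3)]
      right.runs_bounded_shift[OF wf_config_init assms(4)]
    by (auto elim: runs_bounded_mono)
  show ?thesis
  proof (rule runs_bounded_Suc_iff[THEN iffD2], intro allI impI)
    fix t assume "applicable (choice_machine G H) t (init_config (choice_machine G H) x)"
    with step(1) have "t = tG \<or> t = tH"
      unfolding enabled_def by blast
    with bounds step(2,3) show "runs_bounded (choice_machine G H)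
        (apply_trans t (init_config (choice_machine G H) x)) (Suc (max m n))"
      by auto
  qed
qed

lemma run_sum_choice_machine:
  assumes G: "is_NPTM G" and H: "is_NPTM H"
  shows "run_sum (choice_machine G H) (init_config (choice_machine G H) x) f =
    run_sum G (init_config G x) (\<lambda>(_, tp, h). f (3, tp, h)) +
    run_sum H (init_config H x) (\<lambda>(_, tp, h). f (6, tp, h))"
proof -
  have fin: "finite (delta G)" "finite (delta H)"
    using G H by (simp_all add: is_NPTM_def)
  interpret left: leaf_copy_machine "choice_machine G H" G 1 "{3}" "{3}"
      "choice_start G H \<union> leaf_copy H 2 {6} {6}"
    using fin by (rule leaf_copy_machine_choice_left)
  interpret right: leaf_copy_machine "choice_machine G H" H 2 "{6}" "{6}"
      "choice_start G H \<union> leaf_copy G 1 {3} {3}"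
    using fin by (rule leaf_copy_machine_choice_right)
  obtain kG where kG: "\<And>x. runs_bounded G (init_config G x) (kG * length x ^ kG + kG)"
    using NPTM_runs_bounded[OF G] by blast
  obtain kH where kH: "\<And>x. runs_bounded H (init_config H x) (kH * length x ^ kH + kH)"
    using NPTM_runs_bounded[OF H] by blast
  let ?C = "choice_machine G H"
  obtain tG tH where step:
    "enabled ?C (init_config ?C x) = {tG, tH}" "tG \<noteq> tH"
    "apply_trans tG (init_config ?C x) = shift_config 1 (init_config G x)"
    "apply_trans tH (init_config ?C x) = shift_config 2 (init_config H x)"
    by (rule choice_machine_first_step)
  have "run_sum ?C (init_config ?C x) f = (\<Sum>t\<in>{tG, tH}. run_sum ?C (apply_trans t (init_config ?C x)) f)"
    unfolding step(1)[symmetric]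
    using runs_bounded_choice_machine[OF fin kG kH] step(1)
    by (intro run_sum_step finite_choice_machine fin) (auto simp: halted_iff_enabled_empty)
  also have "\<dots> = run_sum ?C (shift_config 1 (init_config G x)) f + run_sum ?C (shift_config 2 (init_config H x)) f"
    using step(2-4) by simp
  also have "\<dots> = run_sum G (init_config G x) (\<lambda>(_, tp, h). f (3, tp, h)) +
      run_sum H (init_config H x) (\<lambda>(_, tp, h). f (6, tp, h))"
    unfolding left.run_sum_shift[OF wf_config_init kG] right.run_sum_shift[OF wf_config_init kH]
    by (simp add: leaf_targets_def)
  finally show ?thesis .
qed

lemma NPTM_choice_machine:
  assumes G: "is_NPTM G" and H: "is_NPTM H"
  shows "is_NPTM (choice_machine G H)"
proof -
  have fin: "finite (delta G)" "finite (delta H)"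
    using G H by (simp_all add: is_NPTM_def)
  obtain kG where kG: "\<And>x. runs_bounded G (init_config G x) (kG * length x ^ kG + kG)"
    using NPTM_runs_bounded[OF G] by blast
  obtain kH where kH: "\<And>x. runs_bounded H (init_config H x) (kH * length x ^ kH + kH)"
    using NPTM_runs_bounded[OF H] by blast
  let ?k = "kG + kH"
  have "runs_bounded (choice_machine G H) (init_config (choice_machine G H) x)
      (?k * length x ^ ?k + ?k + 2)" for x
  proof (rule runs_bounded_mono[OF runs_bounded_choice_machine[OF fin kG kH]])
    show "Suc (Suc (max (kG * length x ^ kG + kG) (kH * length x ^ kH + kH))) \<le>
        ?k * length x ^ ?k + ?k + 2"
      using mult_power_self_mono[of kG ?k "length x"] mult_power_self_mono[of kH ?k "length x"]
      by simp
  qed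
  then have "poly_time (choice_machine G H)"
    by (rule poly_timeI)
  moreover have "finite (delta (choice_machine G H))"
    using fin by (rule finite_choice_machine)
  ultimately show ?thesis
    by (simp add: is_NPTM_def choice_machine_def)
qed

lemma acc_choice_machine:
  "is_NPTM G \<Longrightarrow> is_NPTM H \<Longrightarrow> acc (choice_machine G H) x = card (paths G x)"
  by (simp add: acc_eq_run_sum NPTM_choice_machine run_sum_choice_machine card_paths_eq_run_sum
      case_prod_unfold) (simp add: choice_machine_def)

lemma rej_choice_machine:
  "is_NPTM G \<Longrightarrow> is_NPTM H \<Longrightarrow> rej (choice_machine G H) x = card (paths H x)"
  by (simp add: rej_eq_run_sum NPTM_choice_machine run_sum_choice_machine card_paths_eq_run_sum
      case_prod_unfold) (simp add: choice_machine_def)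

lemma Gap_totP_subset_GapP: "Gap_totP \<subseteq> GapP"
proof
  fix f assume "f \<in> Gap_totP"
  then obtain G H where G: "is_NPTM G" and H: "is_NPTM H"
    and f: "f = (\<lambda>x. int (tot G x) - int (tot H x))"
    unfolding Gap_totP_def TotP_def by blast
  have "f x = int (acc (choice_machine G H) x) - int (rej (choice_machine G H) x)" for x
    using card_paths_pos[OF G, of x] card_paths_pos[OF H, of x]
    by (simp add: f tot_def acc_choice_machine[OF G H] rej_choice_machine[OF G H])
  then have "f = (\<lambda>x. int (acc (choice_machine G H) x) - int (rej (choice_machine G H) x))" ..
  with NPTM_choice_machine[OF G H] show "f \<in> GapP"
    unfolding GapP_def by blast
qed

theorem proposition4:
  shows "Gap_totP = GapP"
  using Gap_totP_subset_GapP GapP_subset_Gap_totP by (rule subset_antisym)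

end
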